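(* Let $a\in\mathbb{N}_0$ and $b\notin\mathbb{Z}$, and let $\rho(x;a,b)$ be the unique quasi-rational antiderivative of $(1-x)^a(1+x)^b$ belonging to $(1+x)^{b+1}\mathcal{Q}_\pm$. Then $\rho(1;a,b)=\nu(a,b)$, where $\nu(a,b)=2^{1+a+b}\frac{\Gamma(a+1)\Gamma(b+1)}{\Gamma(a+b+2)}$.
   Context: $\mathcal{Q}_\pm$ is the set of rational functions regular at $x=1$ and $x=-1$. A function is quasi-rational if its logarithmic derivative is rational. *)

theory Defs
  imports "HOL-Analysis.Analysis" "HOL-Computational_Algebra.Polynomial"
begin

definition nu :: "nat \<Rightarrow> real \<Rightarrow> real" where
  "nu a b = 2 powr (1 + real a + b) * Gamma (real a + 1) * Gamma (b + 1) / Gamma (real a + b + 2)"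

text \<open>A rational function p/q regular at x = 1 and x = -1 (an element of Q_pm).\<close>
definition in_Qpm :: "real poly \<Rightarrow> real poly \<Rightarrow> bool" where
  "in_Qpm p q \<longleftrightarrow> poly q 1 \<noteq> 0 \<and> poly q (-1) \<noteq> 0"

definition is_rho :: "nat \<Rightarrow> real \<Rightarrow> real poly \<Rightarrow> real poly \<Rightarrow> bool" where
  "is_rho a b p q \<longleftrightarrow> in_Qpm p q \<and>
     (\<forall>x. -1 < x \<and> x < 1 \<and> poly q x \<noteq> 0 \<longrightarrow>
        ((\<lambda>t. (1 + t) powr (b + 1) * poly p t / poly q t)
           has_real_derivative ((1 - x) ^ a * (1 + x) powr b)) (at x))"

definition rho_at_1 :: "real \<Rightarrow> real poly \<Rightarrow> real poly \<Rightarrow> real" where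
  "rho_at_1 b p q = 2 powr (b + 1) * poly p 1 / poly q 1"

end

theory Submission
  imports Defs
begin

text \<open>Writing \<open>\<rho> = (1 + x) powr (b + 1) * p / q\<close>, the equation
  \<open>\<rho>' = (1 - x) ^ a * (1 + x) powr b\<close> becomes the polynomial identity
  \<open>(b + 1) p q + (1 + x) (p' q - p q') = (1 - x) ^ a q\<^sup>2\<close>.
  Expanding \<open>(1 - x) ^ a = (2 - (1 + x)) ^ a\<close> and integrating term by term gives the solution
  \<open>P = \<Sum>k\<le>a. (a choose k) 2 ^ (a - k) (-1) ^ k (1 + x) ^ k / (b + 1 + k)\<close> with \<open>q = 1\<close>.
  For any other solution, \<open>p - P q\<close> solves the homogeneous equation, whose top coefficient is
  \<open>b + 1 + deg (p - P q) - deg q\<close> times a nonzero number; as \<open>b \<notin> \<int>\<close>, this forces \<open>p = P q\<close>.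
  So \<open>\<rho>(1) = 2 powr (b + 1) P(1)\<close>, and the partial fraction expansion
  \<open>\<Sum>k\<le>a. (a choose k) (-1) ^ k / (s + k) = a! / pochhammer s (a + 1)\<close> turns this into \<open>\<nu>(a, b)\<close>.\<close>

lemma sum_choose_Suc:
  fixes g :: "nat \<Rightarrow> 'a :: comm_semiring_1"
  shows "(\<Sum>k\<le>Suc n. of_nat (Suc n choose k) * g k) =
         (\<Sum>k\<le>n. of_nat (n choose k) * g k) + (\<Sum>k\<le>n. of_nat (n choose k) * g (Suc k))"
proof -
  have "(\<Sum>k\<le>Suc n. of_nat (Suc n choose k) * g k)
      = (g 0 + (\<Sum>k\<le>n. of_nat (n choose Suc k) * g (Suc k))) + (\<Sum>k\<le>n. of_nat (n choose k) * g (Suc k))"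
    by (simp add: sum.atMost_Suc_shift sum.distrib algebra_simps del: sum.atMost_Suc)
  also have "g 0 + (\<Sum>k\<le>n. of_nat (n choose Suc k) * g (Suc k)) = (\<Sum>k\<le>n. of_nat (n choose k) * g k)"
    using sum.atMost_Suc_shift[of "\<lambda>k. of_nat (n choose k) * g k" n] by (simp add: binomial_eq_0)
  finally show ?thesis .
qed

lemma sum_choose_alternating_divide:
  fixes s :: "'a :: field_char_0"
  assumes "pochhammer s (Suc n) \<noteq> 0"
  shows "(\<Sum>k\<le>n. of_nat (n choose k) * (-1)^k / (s + of_nat k)) = fact n / pochhammer s (Suc n)"
  using assms
proof (induction n arbitrary: s)
  case 0
  then show ?case by simp
next
  case (Suc n)
  define Q where "Q = pochhammer (s + 1) n"
  have poch_s: "pochhammer s (Suc (Suc n)) = s * Q * (s + 1 + of_nat n)"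
    unfolding Q_def pochhammer_rec[of s "Suc n"] pochhammer_Suc[of "s + 1" n] by (simp add: algebra_simps)
  have nz: "s \<noteq> 0" "Q \<noteq> 0" "s + 1 + of_nat n \<noteq> 0"
    using Suc.prems unfolding poch_s by auto
  have IH_s: "(\<Sum>k\<le>n. of_nat (n choose k) * (-1)^k / (s + of_nat k)) = fact n / (s * Q)"
    using Suc.IH[of s] nz by (simp add: pochhammer_rec Q_def)
  have IH_s1: "(\<Sum>k\<le>n. of_nat (n choose k) * (-1)^k / (s + 1 + of_nat k)) = fact n / (Q * (s + 1 + of_nat n))"
    using Suc.IH[of "s + 1"] nz by (simp add: pochhammer_Suc Q_def)
  have "(\<Sum>k\<le>Suc n. of_nat (Suc n choose k) * (-1)^k / (s + of_nat k))
      = (\<Sum>k\<le>n. of_nat (n choose k) * (-1)^k / (s + of_nat k))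
        - (\<Sum>k\<le>n. of_nat (n choose k) * (-1)^k / (s + 1 + of_nat k))"
    using sum_choose_Suc[of n "\<lambda>k. (-1)^k / (s + of_nat k)"]
    by (simp add: sum_negf[symmetric] add_ac)
  also have "\<dots> = fact (Suc n) / pochhammer s (Suc (Suc n))"
    unfolding IH_s IH_s1 poch_s using nz by (simp add: divide_simps) (simp add: algebra_simps)
  finally show ?case .
qed

definition deriv_numerator :: "'a :: idom \<Rightarrow> 'a poly \<Rightarrow> 'a poly \<Rightarrow> 'a poly" where
  "deriv_numerator s p q = smult s (p * q) + [:1, 1:] * (pderiv p * q - p * pderiv q)"

lemma deriv_numerator_diff_mult:
  "deriv_numerator s (p - r * q) q = deriv_numerator s p q - q ^ 2 * deriv_numerator s r 1"
  unfolding deriv_numerator_def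
  by (simp add: pderiv_diff pderiv_mult smult_diff_right algebra_simps power2_eq_square)

lemma coeff_mult_degree_le_sum:
  fixes p q :: "'a :: {comm_semiring_0, semiring_no_zero_divisors} poly"
  assumes "degree p \<le> i" "degree q \<le> j"
  shows "coeff (p * q) (i + j) = coeff p i * coeff q j"
proof (cases "degree p = i \<and> degree q = j")
  case True
  then show ?thesis using coeff_mult_degree_sum[of p q] by simp
next
  case False
  then have "degree (p * q) < i + j"
    using assms degree_mult_le[of p q] by linarith
  with False assms show ?thesis by (auto simp: coeff_eq_0)
qed

lemma coeff_pCons_0_pderiv: "coeff (pCons 0 (pderiv p)) k = of_nat k * coeff p k"
  by (cases k) (auto simp: coeff_pderiv)

lemma degree_pCons_0_pderiv_le: "degree (pCons 0 (pderiv p)) \<le> degree p"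
  by (rule degree_le) (auto simp: coeff_pCons_0_pderiv coeff_eq_0)

lemma coeff_pderiv_mult_degree_sum:
  fixes p q :: "'a :: {idom, ring_char_0} poly"
  shows "coeff (pderiv p * q) (degree p + degree q) = 0"
proof (cases "degree p = 0")
  case True
  then have "pderiv p = 0" by (simp add: pderiv_eq_0_iff)
  then show ?thesis by simp
next
  case False
  have "degree (pderiv p * q) \<le> degree p - 1 + degree q"
    using degree_mult_le[of "pderiv p" q] degree_pderiv[of p] by simp
  with False show ?thesis by (simp add: coeff_eq_0)
qed

text \<open>Splitting \<open>[:1, 1:] = 1 + x\<close>, the part \<open>pderiv p * q - p * pderiv q\<close> drops in degree
  and \<open>x p' q - p x q'\<close> contributes \<open>deg p - deg q\<close> times the leading term.\<close>
lemma coeff_deriv_numerator_degree_sum: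
  fixes p q :: "'a :: {idom, ring_char_0} poly"
  shows "coeff (deriv_numerator s p q) (degree p + degree q)
    = (s + of_nat (degree p) - of_nat (degree q)) * lead_coeff p * lead_coeff q"
proof -
  define \<theta>p where "\<theta>p = pCons 0 (pderiv p)"
  define \<theta>q where "\<theta>q = pCons 0 (pderiv q)"
  have split: "deriv_numerator s p q
      = smult s (p * q) + (pderiv p * q - p * pderiv q) + (\<theta>p * q - p * \<theta>q)"
  proof -
    have "[:1, 1:] * r = r + pCons 0 r" for r :: "'a poly"
      by (simp add: one_pCons)
    then show ?thesis unfolding deriv_numerator_def \<theta>p_def \<theta>q_def by (simp add: algebra_simps)
  qed
  have "coeff (\<theta>p * q) (degree p + degree q) = coeff \<theta>p (degree p) * lead_coeff q"
    by (rule coeff_mult_degree_le_sum) (simp_all only: \<theta>p_def degree_pCons_0_pderiv_le order_refl)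
  moreover have "coeff (p * \<theta>q) (degree p + degree q) = lead_coeff p * coeff \<theta>q (degree q)"
    by (rule coeff_mult_degree_le_sum) (simp_all only: \<theta>q_def degree_pCons_0_pderiv_le order_refl)
  moreover have "coeff \<theta>p (degree p) = of_nat (degree p) * lead_coeff p"
    unfolding \<theta>p_def by (rule coeff_pCons_0_pderiv)
  moreover have "coeff \<theta>q (degree q) = of_nat (degree q) * lead_coeff q"
    unfolding \<theta>q_def by (rule coeff_pCons_0_pderiv)
  moreover have "coeff (pderiv p * q) (degree p + degree q) = 0"
    by (rule coeff_pderiv_mult_degree_sum)
  moreover have "coeff (p * pderiv q) (degree p + degree q) = 0"
    using coeff_pderiv_mult_degree_sum[of q p] by (simp add: mult.commute add.commute)
  ultimately show ?thesis
    unfolding split coeff_add coeff_diff coeff_smult coeff_mult_degree_sum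
    by (simp add: algebra_simps)
qed

lemma deriv_numerator_eq_0_iff:
  fixes p q :: "'a :: {idom, ring_char_0} poly"
  assumes "s \<notin> \<int>" "q \<noteq> 0"
  shows "deriv_numerator s p q = 0 \<longleftrightarrow> p = 0"
proof
  assume L: "deriv_numerator s p q = 0"
  show "p = 0"
  proof (rule ccontr)
    assume "p \<noteq> 0"
    with assms(2) have "lead_coeff p * lead_coeff q \<noteq> 0" by simp
    moreover have "(s + of_nat (degree p) - of_nat (degree q)) * (lead_coeff p * lead_coeff q) = 0"
      using L coeff_deriv_numerator_degree_sum[of s p q] by (simp add: mult.assoc)
    ultimately have "s + of_nat (degree p) - of_nat (degree q) = 0"
      by simp
    then have "s = of_nat (degree q) - of_nat (degree p)"
      by (simp add: algebra_simps)
    with assms(1) show False by simp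
  qed
qed (simp add: deriv_numerator_def)

lemma has_real_derivative_powr_mult_poly_divide:
  fixes p q :: "real poly"
  assumes "x > -1" "poly q x \<noteq> 0"
  shows "((\<lambda>t. (1 + t) powr s * poly p t / poly q t) has_real_derivative
           (1 + x) powr (s - 1) * poly (deriv_numerator s p q) x / (poly q x)\<^sup>2) (at x)"
proof -
  have "((\<lambda>t. (1 + t) powr s) has_real_derivative s * (1 + x) powr (s - 1)) (at x)"
    using DERIV_fun_powr[of "\<lambda>t. 1 + t" 1 x s] assms(1)
    by (auto intro!: derivative_eq_intros)
  from DERIV_divide[OF DERIV_mult[OF this poly_DERIV] poly_DERIV assms(2)]
  have "((\<lambda>t. (1 + t) powr s * poly p t / poly q t) has_real_derivative
      ((s * (1 + x) powr (s - 1) * poly p x + poly (pderiv p) x * (1 + x) powr s) * poly q x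
        - (1 + x) powr s * poly p x * poly (pderiv q) x) / (poly q x * poly q x)) (at x)" .
  moreover have "(1 + x) powr s = (1 + x) powr (s - 1) * (1 + x)"
    using assms(1) by (simp add: powr_diff)
  ultimately show ?thesis
    by (simp add: deriv_numerator_def power2_eq_square algebra_simps)
qed

lemma poly_eqI_infinite:
  fixes p r :: "'a :: idom poly"
  assumes "infinite {x. poly p x = poly r x}"
  shows "p = r"
proof (rule ccontr)
  assume "p \<noteq> r"
  then have "finite {x. poly (p - r) x = 0}" by (intro poly_roots_finite) simp
  with assms show False by simp
qed

lemma is_rho_iff_deriv_numerator:
  "is_rho a b p q \<longleftrightarrow> in_Qpm p q \<and> deriv_numerator (b + 1) p q = [:1, -1:] ^ a * q\<^sup>2"
proof -
  have deriv: "((\<lambda>t. (1 + t) powr (b + 1) * poly p t / poly q t) has_real_derivative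
      (1 + x) powr b * poly (deriv_numerator (b + 1) p q) x / (poly q x)\<^sup>2) (at x)"
    if "-1 < x" "poly q x \<noteq> 0" for x
    using has_real_derivative_powr_mult_poly_divide[of x q "b + 1" p] that by simp
  show ?thesis
  proof
    assume rho: "is_rho a b p q"
    then have "q \<noteq> 0" by (auto simp: is_rho_def in_Qpm_def)
    define S where "S = {-1<..<1} - {x. poly q x = 0}"
    have "infinite S"
      unfolding S_def using poly_roots_finite[OF \<open>q \<noteq> 0\<close>] by (intro Diff_infinite_finite) auto
    moreover have "S \<subseteq> {x. poly (deriv_numerator (b + 1) p q) x = poly ([:1, -1:] ^ a * q\<^sup>2) x}"
    proof
      fix x assume "x \<in> S"
      then have x: "-1 < x" "x < 1" "poly q x \<noteq> 0" by (auto simp: S_def)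
      have "(1 + x) powr b * poly (deriv_numerator (b + 1) p q) x / (poly q x)\<^sup>2
          = (1 - x) ^ a * (1 + x) powr b"
        using rho x by (auto simp: is_rho_def intro: DERIV_unique[OF deriv])
      with x show "x \<in> {x. poly (deriv_numerator (b + 1) p q) x = poly ([:1, -1:] ^ a * q\<^sup>2) x}"
        by (simp add: field_simps)
    qed
    ultimately have "deriv_numerator (b + 1) p q = [:1, -1:] ^ a * q\<^sup>2"
      by (intro poly_eqI_infinite) (rule infinite_super)
    with rho show "in_Qpm p q \<and> deriv_numerator (b + 1) p q = [:1, -1:] ^ a * q\<^sup>2"
      by (simp add: is_rho_def)
  next
    assume "in_Qpm p q \<and> deriv_numerator (b + 1) p q = [:1, -1:] ^ a * q\<^sup>2"
    then show "is_rho a b p q"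
      unfolding is_rho_def using deriv by (simp add: mult.commute)
  qed
qed

lemma pochhammer_neq_0_if_not_Ints:
  fixes s :: "'a :: field_char_0"
  shows "s \<notin> \<int> \<Longrightarrow> pochhammer s n \<noteq> 0"
  by (auto simp: pochhammer_eq_0_iff)

definition rho_poly :: "nat \<Rightarrow> 'a :: field_char_0 \<Rightarrow> 'a poly" where
  "rho_poly a s = (\<Sum>k\<le>a. smult (of_nat (a choose k) * 2 ^ (a - k) * (-1) ^ k / (s + of_nat k)) ([:1, 1:] ^ k))"

lemma deriv_numerator_sum_smult:
  "deriv_numerator s (\<Sum>k\<in>A. smult (c k) (f k)) 1 = (\<Sum>k\<in>A. smult (c k) (deriv_numerator s (f k) 1))"
proof -
  have "pderiv (\<Sum>k\<in>A. smult (c k) (f k)) = (\<Sum>k\<in>A. smult (c k) (pderiv (f k)))"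
    using higher_pderiv_sum[of 1 "\<lambda>k. smult (c k) (f k)" A] by (simp add: pderiv_smult)
  moreover have "smult s (\<Sum>k\<in>A. smult (c k) (f k)) = (\<Sum>k\<in>A. smult (c k) (smult s (f k)))"
    by (induction A rule: infinite_finite_induct) (simp_all add: smult_add_right mult.commute)
  ultimately show ?thesis
    by (simp add: deriv_numerator_def sum_distrib_left smult_add_right sum.distrib mult_smult_right
        del: mult_pCons_left)
qed

lemma deriv_numerator_power:
  "deriv_numerator s ([:1, 1:] ^ k) 1 = smult (s + of_nat k) ([:1, 1:] ^ k)"
proof -
  have "[:1, 1:] * pderiv ([:1, 1:] ^ k) = smult (of_nat k) ([:1, 1:] ^ k)"
  proof (cases k)
    case (Suc j)
    have pderiv_linear: "pderiv [:1, 1:] = 1" by (simp add: pderiv_pCons)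
    have pderiv_power: "pderiv ([:1, 1:] ^ Suc j) = smult (of_nat (Suc j)) ([:1, 1:] ^ j)"
      by (simp only: pderiv_power_Suc pderiv_linear mult_1_right)
    show ?thesis unfolding Suc pderiv_power by (simp only: mult_smult_right power_Suc)
  qed simp
  then show ?thesis by (simp add: deriv_numerator_def smult_add_left)
qed

lemma deriv_numerator_rho_poly:
  fixes s :: "'a :: field_char_0"
  assumes "s \<notin> \<int>"
  shows "deriv_numerator s (rho_poly a s) 1 = [:1, -1:] ^ a"
proof -
  have nz: "s + of_nat k \<noteq> 0" for k
    using pochhammer_neq_0_if_not_Ints[OF assms, of "Suc k"] by (simp add: pochhammer_Suc)
  have "deriv_numerator s (rho_poly a s) 1
      = (\<Sum>k\<le>a. smult (of_nat (a choose k) * 2 ^ (a - k) * (-1) ^ k) ([:1, 1:] ^ k))"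
    unfolding rho_poly_def deriv_numerator_sum_smult deriv_numerator_power smult_smult
    by (intro sum.cong refl) (simp add: nz)
  also have "\<dots> = [:1, -1:] ^ a"
  proof (rule poly_ext)
    fix x :: 'a
    have "poly (\<Sum>k\<le>a. smult (of_nat (a choose k) * 2 ^ (a - k) * (-1) ^ k) ([:1, 1:] ^ k)) x
        = (\<Sum>k\<le>a. of_nat (a choose k) * (- (1 + x)) ^ k * 2 ^ (a - k))"
      unfolding power_minus[of "1 + x"] by (simp add: poly_sum mult_ac)
    also have "\<dots> = (- (1 + x) + 2) ^ a"
      by (rule binomial_ring [symmetric])
    finally show "poly (\<Sum>k\<le>a. smult (of_nat (a choose k) * 2 ^ (a - k) * (-1) ^ k) ([:1, 1:] ^ k)) x
        = poly ([:1, -1:] ^ a) x"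
      by (simp add: poly_power)
  qed
  finally show ?thesis .
qed

lemma poly_rho_poly_1:
  fixes s :: "'a :: field_char_0"
  assumes "pochhammer s (Suc a) \<noteq> 0"
  shows "poly (rho_poly a s) 1 = 2 ^ a * fact a / pochhammer s (Suc a)"
proof -
  have "poly (rho_poly a s) 1 = 2 ^ a * (\<Sum>k\<le>a. of_nat (a choose k) * (-1) ^ k / (s + of_nat k))"
    unfolding rho_poly_def poly_sum sum_distrib_left
  proof (rule sum.cong)
    fix k assume "k \<in> {..a}"
    then have "(2 :: 'a) ^ (a - k) * 2 ^ k = 2 ^ a" by (simp flip: power_add)
    then show "poly (smult (of_nat (a choose k) * 2 ^ (a - k) * (-1) ^ k / (s + of_nat k)) ([:1, 1:] ^ k)) 1
        = 2 ^ a * (of_nat (a choose k) * (-1) ^ k / (s + of_nat k))"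
      by (simp add: algebra_simps)
  qed simp
  with assms show ?thesis by (simp add: sum_choose_alternating_divide)
qed

lemma nu_eq_pochhammer:
  assumes "b \<notin> \<int>"
  shows "nu a b = 2 powr (b + 1) * (2 ^ a * fact a / pochhammer (b + 1) (Suc a))"
proof -
  have "b + of_nat k \<notin> \<int>\<^sub>\<le>\<^sub>0" for k
    using assms nonpos_Ints_subset_Ints by auto
  from this[of 1] this[of "a + 2"] have "b + 1 \<notin> \<int>\<^sub>\<le>\<^sub>0" "real a + b + 2 \<notin> \<int>\<^sub>\<le>\<^sub>0"
    by (simp_all add: algebra_simps)
  then have "pochhammer (b + 1) (Suc a) = Gamma (real a + b + 2) / Gamma (b + 1)"
    "Gamma (b + 1) \<noteq> 0" "Gamma (real a + b + 2) \<noteq> 0"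
    by (simp_all add: pochhammer_Gamma Gamma_eq_zero_iff algebra_simps)
  moreover have "Gamma (real a + 1) = fact a"
    using Gamma_fact[of a] by (simp add: add.commute)
  moreover have "(2 :: real) powr (1 + real a + b) = 2 powr (b + 1) * 2 ^ a"
    by (simp add: powr_add powr_realpow algebra_simps)
  ultimately show ?thesis by (simp add: nu_def)
qed

theorem mainTheorem15:
  fixes a :: nat and b :: real
  assumes "b \<notin> \<int>"
  shows "(\<exists>p q. is_rho a b p q) \<and> (\<forall>p q. is_rho a b p q \<longrightarrow> rho_at_1 b p q = nu a b)"
proof -
  define P where "P = rho_poly a (b + 1)"
  have s: "b + 1 \<notin> \<int>" using assms by simp
  have P: "deriv_numerator (b + 1) P 1 = [:1, -1:] ^ a"
    unfolding P_def using s by (rule deriv_numerator_rho_poly)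
  have "is_rho a b P 1"
    using P by (simp add: is_rho_iff_deriv_numerator in_Qpm_def)
  moreover have "rho_at_1 b p q = nu a b" if "is_rho a b p q" for p q
  proof -
    from that have "poly q 1 \<noteq> 0" and L: "deriv_numerator (b + 1) p q = [:1, -1:] ^ a * q\<^sup>2"
      by (simp_all add: is_rho_iff_deriv_numerator in_Qpm_def)
    then have "q \<noteq> 0" by auto
    have "deriv_numerator (b + 1) (p - P * q) q = 0"
      by (simp add: deriv_numerator_diff_mult L P)
    then have "p = P * q"
      using deriv_numerator_eq_0_iff[OF s \<open>q \<noteq> 0\<close>] by simp
    moreover have "pochhammer (b + 1) (Suc a) \<noteq> 0"
      using s by (rule pochhammer_neq_0_if_not_Ints)
    ultimately show ?thesis
      using \<open>poly q 1 \<noteq> 0\<close> assms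
      by (simp add: rho_at_1_def P_def poly_rho_poly_1 nu_eq_pochhammer)
  qed
  ultimately show ?thesis by blast
qed

end
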